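(* Fix $n\ge1$ and let $\mathcal A_n=\{(a_1,\dots,a_n):a_k\in\mathbb Z_{\ge0},\ \sum_{i=1}^n ia_i=n\}$. For integers $K\ge n$ and $\theta>0$, let $\mathbf A_n$ be the $\mathcal A_n$-valued random variable (the allele-count partition of a sample of size $n$ from a symmetric $\mathrm{Dirichlet}(\frac\theta K,\dots,\frac\theta K)$ population with $K$ alleles) with distribution $$P\{\mathbf A_n=\mathbf a\}=\frac{n!}{\prod_{j=1}^n a_j!}\,\frac{K!}{(K-\sum_{i=1}^n a_i)!}\,\frac{1}{\theta_{(n)}}\prod_{j=1}^n\Big(\frac{\Gamma(j+\theta/K)}{j!\,\Gamma(\theta/K)}\Big)^{a_j},$$ where $\theta_{(n)}=\theta(\theta+1)\cdots(\theta+n-1)$. Assume $\theta=\theta(K)$ grows with $K$ and $\lim_{K\to\infty}\theta/K=c\in(0,+\infty]$. Then, as $K\to\infty$, the family of laws of $\mathbf A_n$ satisfies an LDP on $\mathcal A_n$ with speed $\log K$ and rate function $I_{\mathrm{esf}}(\mathbf a)=n-\sum_{i=1}^n a_i$.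
   Context: An LDP with speed $\log K$ uses normalization $(\log K)^{-1}\log$ as $K\to\infty$. *)

theory Defs
  imports "HOL-Analysis.Analysis"
begin

definition elog :: "real \<Rightarrow> ereal" where
  "elog p = (if p \<le> 0 then - \<infinity> else ereal (ln p))"

definition ldp :: "(nat \<Rightarrow> 'a set \<Rightarrow> real) \<Rightarrow> (nat \<Rightarrow> real) \<Rightarrow> ('a \<Rightarrow> ereal) \<Rightarrow> 'a topology \<Rightarrow> bool"
  where "ldp P s I T \<longleftrightarrow>
     (\<forall>x\<in>topspace T. I x \<ge> 0) \<and>
     (\<forall>\<alpha>::real. closedin T {x \<in> topspace T. I x \<le> ereal \<alpha>}) \<and>
     (\<forall>F. closedin T F \<longrightarrow>
        limsup (\<lambda>K. ereal (1 / s K) * elog (P K F)) \<le> - (INF x\<in>F. I x)) \<and>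
     (\<forall>G. openin T G \<longrightarrow>
        liminf (\<lambda>K. ereal (1 / s K) * elog (P K G)) \<ge> - (INF x\<in>G. I x))"

text \<open>The state space A_n; a = [a_1, ..., a_n] is stored as a list with a_j = a ! (j-1).\<close>
definition alloc_space :: "nat \<Rightarrow> nat list set" where
  "alloc_space n = {a. length a = n \<and> (\<Sum>i<n. (i + 1) * a ! i) = n}"

definition dirichlet_pmf :: "nat \<Rightarrow> nat \<Rightarrow> real \<Rightarrow> nat list \<Rightarrow> real" where
  "dirichlet_pmf n K \<theta> a =
     fact n / (\<Prod>j<n. fact (a ! j))
     * fact K / fact (K - (\<Sum>i<n. a ! i))
     * (1 / pochhammer \<theta> n)
     * (\<Prod>j<n. (Gamma (real (j + 1) + \<theta> / real K)
                   / (fact (j + 1) * Gamma (\<theta> / real K))) ^ (a ! j))"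

definition dirichlet_law :: "nat \<Rightarrow> nat \<Rightarrow> real \<Rightarrow> nat list set \<Rightarrow> real" where
  "dirichlet_law n K \<theta> B = (\<Sum>a\<in>B \<inter> alloc_space n. dirichlet_pmf n K \<theta> a)"

definition I_esf :: "nat \<Rightarrow> nat list \<Rightarrow> ereal" where
  "I_esf n a = ereal (real n - (\<Sum>i<n. real (a ! i)))"

end

theory Submission
  imports Defs
begin

text \<open>Once \<open>\<theta>/K\<close> stays above some \<open>\<delta> > 0\<close>, every factor of the sampling formula has exact
  polynomial order in \<open>K\<close>: with \<open>|a| = \<Sum>\<^sub>i a\<^sub>i\<close>, the falling factorial \<open>K!/(K - |a|)!\<close> is of
  order \<open>K\<^bsup>|a|\<^esup>\<close>; the \<open>j\<close>-th Gamma ratio is a rising factorial of \<open>\<theta>/K\<close>, hence of order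
  \<open>(\<theta>/K)\<^bsup>j\<^esup>\<close>, so by \<open>\<Sum>\<^sub>j j a\<^sub>j = n\<close> their product is of order \<open>(\<theta>/K)\<^bsup>n\<^esup>\<close>; and \<open>\<theta>(\<theta>+1)\<cdots>(\<theta>+n-1)\<close>
  is of order \<open>\<theta>\<^bsup>n\<^esup>\<close>. Hence \<open>P{A\<^sub>n = a}\<close> is of order \<open>K\<^bsup>|a| - n\<^esup> = K\<^bsup>-I(a)\<^esup>\<close>. On the finite
  discrete state space the probability of a set is of the order of its largest term, so
  the normalised logarithms converge to \<open>-inf I\<close> over the set, which gives both LDP
  bounds at once.\<close>

definition grows_like_powr :: "(nat \<Rightarrow> real) \<Rightarrow> real \<Rightarrow> bool" where
  "grows_like_powr f r \<longleftrightarrow> (\<exists>A>0. \<exists>B>0. eventually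
     (\<lambda>K. A * real K powr r \<le> f K \<and> f K \<le> B * real K powr r) sequentially)"

lemma grows_like_powrI:
  assumes "A > 0" "B > 0"
    and "eventually (\<lambda>K. A * real K powr r \<le> f K \<and> f K \<le> B * real K powr r) sequentially"
  shows "grows_like_powr f r"
  using assms unfolding grows_like_powr_def by blast

lemma grows_like_powr_cong:
  assumes "grows_like_powr f r" and "eventually (\<lambda>K. f K = g K) sequentially"
  shows "grows_like_powr g r"
proof -
  obtain A B where "A > 0" "B > 0"
    and "eventually (\<lambda>K. A * real K powr r \<le> f K \<and> f K \<le> B * real K powr r) sequentially"
    using assms(1) unfolding grows_like_powr_def by blast
  with assms(2) show ?thesis
    by (intro grows_like_powrI[of A B]) (auto elim: eventually_elim2)
qed

lemma grows_like_powr_const: "c > 0 \<Longrightarrow> grows_like_powr (\<lambda>_. c) 0"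
  by (intro grows_like_powrI[of c c] eventually_mono[OF eventually_ge_at_top[of 1]]) auto

lemma grows_like_powr_mult:
  assumes "grows_like_powr f r" and "grows_like_powr g s"
  shows "grows_like_powr (\<lambda>K. f K * g K) (r + s)"
proof -
  obtain A B where AB: "A > 0" "B > 0"
    and f: "eventually (\<lambda>K. A * real K powr r \<le> f K \<and> f K \<le> B * real K powr r) sequentially"
    using assms(1) unfolding grows_like_powr_def by blast
  obtain A' B' where AB': "A' > 0" "B' > 0"
    and g: "eventually (\<lambda>K. A' * real K powr s \<le> g K \<and> g K \<le> B' * real K powr s) sequentially"
    using assms(2) unfolding grows_like_powr_def by blast
  have "eventually (\<lambda>K. (A * A') * real K powr (r + s) \<le> f K * g K
                       \<and> f K * g K \<le> (B * B') * real K powr (r + s)) sequentially"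
    using f g
  proof eventually_elim
    case (elim K)
    have "0 \<le> A * real K powr r" "0 \<le> A' * real K powr s"
      using AB AB' by simp_all
    then have nonneg: "0 \<le> f K" "0 \<le> g K"
      using elim by linarith+
    have "(A * A') * real K powr (r + s) = (A * real K powr r) * (A' * real K powr s)"
      by (simp add: powr_add)
    also have "\<dots> \<le> f K * g K"
      using elim nonneg AB' by (intro mult_mono) auto
    finally have lower: "(A * A') * real K powr (r + s) \<le> f K * g K" .
    from nonneg have "f K * g K \<le> (B * real K powr r) * (B' * real K powr s)"
      using elim AB by (intro mult_mono) auto
    also have "\<dots> = (B * B') * real K powr (r + s)"
      by (simp add: powr_add)
    finally show ?case using lower by blast
  qed
  then show ?thesis
    using AB AB' by (intro grows_like_powrI[of "A * A'" "B * B'"]) auto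
qed

lemma grows_like_powr_sum:
  assumes "finite F" "a\<^sub>0 \<in> F" "\<And>a. a \<in> F \<Longrightarrow> r a \<le> r a\<^sub>0"
    and "\<And>a. a \<in> F \<Longrightarrow> grows_like_powr (f a) (r a)"
  shows "grows_like_powr (\<lambda>K. \<Sum>a\<in>F. f a K) (r a\<^sub>0)"
proof -
  have "\<forall>a\<in>F. \<exists>A B. A > 0 \<and> B > 0 \<and> eventually
      (\<lambda>K. A * real K powr r a \<le> f a K \<and> f a K \<le> B * real K powr r a) sequentially"
    using assms(4) unfolding grows_like_powr_def by simp
  from bchoice[OF this] obtain A where "\<forall>a\<in>F. \<exists>B. A a > 0 \<and> B > 0 \<and> eventually
      (\<lambda>K. A a * real K powr r a \<le> f a K \<and> f a K \<le> B * real K powr r a) sequentially"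
    ..
  from bchoice[OF this] obtain B where "\<forall>a\<in>F. A a > 0 \<and> B a > 0 \<and> eventually
      (\<lambda>K. A a * real K powr r a \<le> f a K \<and> f a K \<le> B a * real K powr r a) sequentially"
    ..
  then have AB: "\<And>a. a \<in> F \<Longrightarrow> A a > 0 \<and> B a > 0"
    and bounds: "\<And>a. a \<in> F \<Longrightarrow> eventually
      (\<lambda>K. A a * real K powr r a \<le> f a K \<and> f a K \<le> B a * real K powr r a) sequentially"
    by blast+
  have "eventually (\<lambda>K. \<forall>a\<in>F.
      A a * real K powr r a \<le> f a K \<and> f a K \<le> B a * real K powr r a) sequentially"
    using bounds by (intro eventually_ball_finite[OF assms(1)]) blast
  then have "eventually (\<lambda>K. A a\<^sub>0 * real K powr r a\<^sub>0 \<le> (\<Sum>a\<in>F. f a K)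
      \<and> (\<Sum>a\<in>F. f a K) \<le> (\<Sum>a\<in>F. B a) * real K powr r a\<^sub>0) sequentially"
    using eventually_ge_at_top[of 1]
  proof eventually_elim
    case (elim K)
    have nonneg: "0 \<le> f a K" if "a \<in> F" for a
    proof -
      have "0 \<le> A a * real K powr r a" using AB[OF that] by simp
      then show ?thesis using elim that by (meson order_trans)
    qed
    have "A a\<^sub>0 * real K powr r a\<^sub>0 \<le> f a\<^sub>0 K"
      using elim assms(2) by blast
    also have "\<dots> \<le> (\<Sum>a\<in>F. f a K)"
      using assms(1,2) nonneg by (intro member_le_sum) auto
    finally have lower: "A a\<^sub>0 * real K powr r a\<^sub>0 \<le> (\<Sum>a\<in>F. f a K)" .
    have "(\<Sum>a\<in>F. f a K) \<le> (\<Sum>a\<in>F. B a * real K powr r a\<^sub>0)"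
    proof (rule sum_mono)
      fix a assume a: "a \<in> F"
      have "f a K \<le> B a * real K powr r a" using elim a by blast
      also have "\<dots> \<le> B a * real K powr r a\<^sub>0"
        using AB[OF a] assms(3)[OF a] elim by (intro mult_left_mono powr_mono) auto
      finally show "f a K \<le> B a * real K powr r a\<^sub>0" .
    qed
    then show ?case using lower by (simp add: sum_distrib_right)
  qed
  moreover have "(\<Sum>a\<in>F. B a) > 0"
    using assms(1,2) AB by (intro sum_pos) auto
  ultimately show ?thesis
    using AB assms(2) by (intro grows_like_powrI) auto
qed

lemma grows_like_powr_tendsto_elog:
  assumes "grows_like_powr f r"
  shows "((\<lambda>K. ereal (1 / ln (real K)) * elog (f K)) \<longlongrightarrow> ereal r) sequentially"
proof -
  obtain A B where AB: "A > 0" "B > 0"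
    and bounds: "eventually (\<lambda>K. A * real K powr r \<le> f K \<and> f K \<le> B * real K powr r) sequentially"
    using assms unfolding grows_like_powr_def by blast
  have const_over_ln: "((\<lambda>K. c / ln (real K)) \<longlongrightarrow> 0) sequentially" for c
    using filterlim_compose[OF ln_at_top filterlim_real_sequentially]
    by (intro tendsto_divide_0[OF tendsto_const] filterlim_at_top_imp_at_infinity)
  have squeeze: "eventually (\<lambda>K. f K > 0
      \<and> ln A / ln (real K) \<le> ln (f K) / ln (real K) - r
      \<and> ln (f K) / ln (real K) - r \<le> ln B / ln (real K)) sequentially"
    using bounds eventually_ge_at_top[of 2]
  proof eventually_elim
    case (elim K)
    then have lnK: "ln (real K) > 0" by simp
    have "0 < A * real K powr r" using AB elim by simp
    then have fpos: "f K > 0" using elim by linarith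
    have "ln (A * real K powr r) \<le> ln (f K)"
      using elim \<open>0 < A * real K powr r\<close> by (subst ln_le_cancel_iff) auto
    then have lower: "ln A \<le> ln (f K) - r * ln (real K)"
      using AB elim by (simp add: ln_mult)
    have "ln (f K) \<le> ln (B * real K powr r)"
      using elim fpos by (subst ln_le_cancel_iff) auto
    then have upper: "ln (f K) - r * ln (real K) \<le> ln B"
      using AB elim by (simp add: ln_mult)
    have "ln (f K) / ln (real K) - r = (ln (f K) - r * ln (real K)) / ln (real K)"
      using lnK by (simp add: diff_divide_distrib)
    then show ?case
      using divide_right_mono[OF lower] divide_right_mono[OF upper] fpos lnK by simp
  qed
  have "((\<lambda>K. ln (f K) / ln (real K) - r) \<longlongrightarrow> 0) sequentially"
    by (rule tendsto_sandwich[OF eventually_mono[OF squeeze] eventually_mono[OF squeeze]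
          const_over_ln[of "ln A"] const_over_ln[of "ln B"]]) simp_all
  from tendsto_add[OF this tendsto_const[of r]]
  have "((\<lambda>K. ereal (ln (f K) / ln (real K))) \<longlongrightarrow> ereal r) sequentially"
    by (intro tendsto_ereal) simp
  moreover have "eventually (\<lambda>K.
      ereal (ln (f K) / ln (real K)) = ereal (1 / ln (real K)) * elog (f K)) sequentially"
    using squeeze by eventually_elim (simp add: elog_def)
  ultimately show ?thesis
    by (rule Lim_transform_eventually)
qed


lemma power_le_pochhammer:
  fixes x :: real
  assumes "0 \<le> x"
  shows "x ^ k \<le> pochhammer x k"
proof -
  have "x ^ k = (\<Prod>i = 0..<k. x)" by simp
  also have "\<dots> \<le> (\<Prod>i = 0..<k. x + real i)"
    using assms by (intro prod_mono) auto
  finally show ?thesis by (simp add: pochhammer_prod)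
qed

lemma pochhammer_le_power:
  fixes x :: real
  assumes "0 \<le> x"
  shows "pochhammer x k \<le> (x + real k - 1) ^ k"
proof -
  have "pochhammer x k = (\<Prod>i = 0..<k. x + real i)" by (simp add: pochhammer_prod)
  also have "\<dots> \<le> (\<Prod>i = 0..<k. x + real k - 1)"
    using assms by (intro prod_mono) auto
  finally show ?thesis by simp
qed

lemma pochhammer_le_scaled_power:
  fixes x \<delta> :: real
  assumes "0 < \<delta>" "\<delta> \<le> x" "k \<le> n"
  shows "pochhammer x k \<le> ((1 + real n / \<delta>) * x) ^ k"
proof (cases "k = 0")
  case False
  have "real n \<le> real n / \<delta> * x"
    using assms mult_right_mono[of \<delta> x "real n"] by (simp add: field_simps)
  then have "x + real k - 1 \<le> (1 + real n / \<delta>) * x"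
    using assms by (simp add: algebra_simps)
  moreover have "0 \<le> x + real k - 1" using False assms by simp
  ultimately have "(x + real k - 1) ^ k \<le> ((1 + real n / \<delta>) * x) ^ k"
    by (rule power_mono)
  with pochhammer_le_power[of x k] assms show ?thesis by simp
qed simp

lemma fact_div_fact_eq_pochhammer:
  assumes "m \<le> K"
  shows "fact K / fact (K - m) = pochhammer (real (K - m) + 1) m"
proof -
  have "(fact K :: real) = fact ((K - m) + m)" using assms by simp
  also have "\<dots> = fact (K - m) * pochhammer (real (K - m) + 1) m"
    by (simp only: pochhammer_fact pochhammer_product') (simp add: add.commute)
  finally show ?thesis by simp
qed

lemma grows_like_powr_fact_div_fact:
  "grows_like_powr (\<lambda>K. fact K / fact (K - m)) (real m)"
proof (rule grows_like_powrI)
  show "eventually (\<lambda>K. 1 / 2 ^ m * real K powr real m \<le> fact K / fact (K - m)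
      \<and> fact K / fact (K - m) \<le> 1 * real K powr real m) sequentially"
    using eventually_ge_at_top[of "max 1 (2 * m)"]
  proof eventually_elim
    case (elim K)
    then have "m \<le> K" "real K > 0" by auto
    have "1 / 2 ^ m * real K ^ m = (real K / 2) ^ m" by (simp add: power_divide)
    also have "\<dots> \<le> (real (K - m) + 1) ^ m"
      using elim by (intro power_mono) (auto simp: of_nat_diff)
    also have "\<dots> \<le> fact K / fact (K - m)"
      using \<open>m \<le> K\<close> by (simp add: fact_div_fact_eq_pochhammer power_le_pochhammer)
    finally have "1 / 2 ^ m * real K ^ m \<le> fact K / fact (K - m)" .
    moreover have "fact K / fact (K - m) \<le> real K ^ m"
      using pochhammer_le_power[of "real (K - m) + 1" m] \<open>m \<le> K\<close>
      by (simp add: fact_div_fact_eq_pochhammer of_nat_diff)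
    ultimately show ?case using \<open>real K > 0\<close> by (simp add: powr_realpow)
  qed
qed simp_all

lemma alloc_space_sum_le: "a \<in> alloc_space n \<Longrightarrow> (\<Sum>i<n. a ! i) \<le> n"
proof -
  assume a: "a \<in> alloc_space n"
  have "(\<Sum>i<n. a ! i) \<le> (\<Sum>i<n. (i + 1) * a ! i)" by (intro sum_mono) auto
  also have "\<dots> = n" using a by (simp add: alloc_space_def)
  finally show ?thesis .
qed

lemma finite_alloc_space: "finite (alloc_space n)"
proof (rule finite_subset)
  show "alloc_space n \<subseteq> {xs. set xs \<subseteq> {0..n} \<and> length xs = n}"
  proof safe
    fix a x assume a: "a \<in> alloc_space n" and "x \<in> set a"
    then obtain i where i: "i < n" "a ! i = x"
      by (auto simp: in_set_conv_nth alloc_space_def)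
    have "a ! i \<le> (\<Sum>i<n. a ! i)" using i by (intro member_le_sum) auto
    with alloc_space_sum_le[OF a] i show "x \<in> {0..n}" by simp
  qed (simp add: alloc_space_def)
qed (simp add: finite_lists_length_eq)

lemma prod_power_alloc_space:
  fixes Y :: real
  assumes "a \<in> alloc_space n"
  shows "(\<Prod>j<n. (Y ^ (j + 1) / fact (j + 1)) ^ (a ! j))
       = Y ^ n / (\<Prod>j<n. fact (j + 1) ^ (a ! j))"
proof -
  have "(\<Prod>j<n. (Y ^ (j + 1) / fact (j + 1)) ^ (a ! j))
      = (\<Prod>j<n. Y ^ ((j + 1) * a ! j)) / (\<Prod>j<n. fact (j + 1) ^ (a ! j))"
    by (simp only: power_divide power_mult prod_dividef)
  also have "(\<Prod>j<n. Y ^ ((j + 1) * a ! j)) = Y ^ (\<Sum>j<n. (j + 1) * a ! j)"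
    by (simp add: power_sum)
  also have "(\<Sum>j<n. (j + 1) * a ! j) = n"
    using assms by (simp add: alloc_space_def)
  finally show ?thesis .
qed

lemma dirichlet_pmf_eq:
  assumes "0 < \<theta> / real K"
  shows "dirichlet_pmf n K \<theta> a = fact n / (\<Prod>j<n. fact (a ! j))
    * (fact K / fact (K - (\<Sum>i<n. a ! i)))
    * ((\<Prod>j<n. (pochhammer (\<theta> / real K) (j + 1) / fact (j + 1)) ^ (a ! j)) / pochhammer \<theta> n)"
proof -
  have "\<theta> / real K \<notin> \<int>\<^sub>\<le>\<^sub>0" using assms by auto
  from pochhammer_Gamma[OF this]
  have "Gamma (real (j + 1) + \<theta> / real K) / (fact (j + 1) * Gamma (\<theta> / real K))
      = pochhammer (\<theta> / real K) (j + 1) / fact (j + 1)" for j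
    by (simp add: add.commute)
  then show ?thesis by (simp add: dirichlet_pmf_def)
qed

lemma prod_pochhammer_alloc_space_bounds:
  fixes X \<delta> :: real
  assumes "0 < \<delta>" "\<delta> \<le> X" and a: "a \<in> alloc_space n"
  shows "X ^ n / (\<Prod>j<n. fact (j + 1) ^ (a ! j))
           \<le> (\<Prod>j<n. (pochhammer X (j + 1) / fact (j + 1)) ^ (a ! j))"
    and "(\<Prod>j<n. (pochhammer X (j + 1) / fact (j + 1)) ^ (a ! j))
           \<le> ((1 + real n / \<delta>) * X) ^ n / (\<Prod>j<n. fact (j + 1) ^ (a ! j))"
proof -
  have "0 < X" using assms by simp
  have "X ^ n / (\<Prod>j<n. fact (j + 1) ^ (a ! j)) = (\<Prod>j<n. (X ^ (j + 1) / fact (j + 1)) ^ (a ! j))"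
    using prod_power_alloc_space[OF a] by simp
  also have "\<dots> \<le> (\<Prod>j<n. (pochhammer X (j + 1) / fact (j + 1)) ^ (a ! j))"
    using \<open>0 < X\<close> by (intro prod_mono conjI power_mono divide_right_mono power_le_pochhammer) auto
  finally show "X ^ n / (\<Prod>j<n. fact (j + 1) ^ (a ! j))
           \<le> (\<Prod>j<n. (pochhammer X (j + 1) / fact (j + 1)) ^ (a ! j))" .
  have "(\<Prod>j<n. (pochhammer X (j + 1) / fact (j + 1)) ^ (a ! j))
      \<le> (\<Prod>j<n. (((1 + real n / \<delta>) * X) ^ (j + 1) / fact (j + 1)) ^ (a ! j))"
    using assms \<open>0 < X\<close>
    by (intro prod_mono conjI power_mono divide_right_mono pochhammer_le_scaled_power)
       (auto simp: pochhammer_nonneg)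
  also have "\<dots> = ((1 + real n / \<delta>) * X) ^ n / (\<Prod>j<n. fact (j + 1) ^ (a ! j))"
    using prod_power_alloc_space[OF a] by simp
  finally show "(\<Prod>j<n. (pochhammer X (j + 1) / fact (j + 1)) ^ (a ! j))
           \<le> ((1 + real n / \<delta>) * X) ^ n / (\<Prod>j<n. fact (j + 1) ^ (a ! j))" .
qed

lemma grows_like_powr_pochhammer_prod_div:
  fixes \<theta> :: "nat \<Rightarrow> real"
  assumes "0 < \<delta>" and ev: "eventually (\<lambda>K. \<delta> \<le> \<theta> K / real K) sequentially"
    and a: "a \<in> alloc_space n"
  shows "grows_like_powr (\<lambda>K. (\<Prod>j<n. (pochhammer (\<theta> K / real K) (j + 1) / fact (j + 1)) ^ (a ! j))
                              / pochhammer (\<theta> K) n) (- real n)"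
proof -
  define L where "L = 1 + real n / \<delta>"
  define D :: real where "D = (\<Prod>j<n. fact (j + 1) ^ (a ! j))"
  have "L > 0" using \<open>0 < \<delta>\<close> by (simp add: L_def add_pos_nonneg)
  have "D > 0" by (simp add: D_def prod_pos)
  show ?thesis
  proof (rule grows_like_powrI)
    show "eventually (\<lambda>K. 1 / (D * L ^ n) * real K powr - real n
        \<le> (\<Prod>j<n. (pochhammer (\<theta> K / real K) (j + 1) / fact (j + 1)) ^ (a ! j)) / pochhammer (\<theta> K) n
      \<and> (\<Prod>j<n. (pochhammer (\<theta> K / real K) (j + 1) / fact (j + 1)) ^ (a ! j)) / pochhammer (\<theta> K) n
        \<le> L ^ n / D * real K powr - real n) sequentially"
      using ev eventually_ge_at_top[of 1]
    proof eventually_elim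
      case (elim K)
      define X where "X = \<theta> K / real K"
      define P where "P = (\<Prod>j<n. (pochhammer X (j + 1) / fact (j + 1)) ^ (a ! j))"
      have "real K \<ge> 1" "\<delta> \<le> X" "0 < X" using elim \<open>0 < \<delta>\<close> by (auto simp: X_def)
      have \<theta>: "\<theta> K = X * real K" using \<open>real K \<ge> 1\<close> by (simp add: X_def)
      have "X \<le> \<theta> K" using \<open>0 < X\<close> \<open>real K \<ge> 1\<close> by (simp add: \<theta>)
      with \<open>\<delta> \<le> X\<close> have "\<delta> \<le> \<theta> K" by simp
      have Kpowr: "real K powr - real n = X ^ n / \<theta> K ^ n"
        using \<open>0 < X\<close> \<open>real K \<ge> 1\<close> by (simp add: \<theta> powr_minus powr_realpow power_mult_distrib inverse_eq_divide)
      have P_lower: "X ^ n / D \<le> P" and P_upper: "P \<le> (L * X) ^ n / D"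
        using prod_pochhammer_alloc_space_bounds[OF \<open>0 < \<delta>\<close> \<open>\<delta> \<le> X\<close> a]
        by (simp_all add: P_def D_def L_def)
      have "0 \<le> X ^ n / D" using \<open>0 < X\<close> \<open>D > 0\<close> by simp
      with P_lower have "0 \<le> P" by linarith
      have T_lower: "\<theta> K ^ n \<le> pochhammer (\<theta> K) n"
        using \<open>\<delta> \<le> \<theta> K\<close> \<open>0 < \<delta>\<close> by (intro power_le_pochhammer) simp
      have T_upper: "pochhammer (\<theta> K) n \<le> (L * \<theta> K) ^ n"
        unfolding L_def using \<open>\<delta> \<le> \<theta> K\<close> \<open>0 < \<delta>\<close> by (intro pochhammer_le_scaled_power) simp_all
      have "0 < \<theta> K ^ n" using \<open>\<delta> \<le> \<theta> K\<close> \<open>0 < \<delta>\<close> by simp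
      have "1 / (D * L ^ n) * real K powr - real n = (X ^ n / D) / (L * \<theta> K) ^ n"
        by (simp add: Kpowr power_mult_distrib)
      also have "\<dots> \<le> P / pochhammer (\<theta> K) n"
        using \<open>0 \<le> P\<close> P_lower T_upper \<open>0 < \<theta> K ^ n\<close> T_lower
        by (intro frac_le) auto
      finally have lower: "1 / (D * L ^ n) * real K powr - real n \<le> P / pochhammer (\<theta> K) n" .
      have "P / pochhammer (\<theta> K) n \<le> ((L * X) ^ n / D) / \<theta> K ^ n"
        using \<open>0 \<le> P\<close> P_upper T_lower \<open>0 < \<theta> K ^ n\<close>
        by (intro frac_le) auto
      also have "\<dots> = L ^ n / D * real K powr - real n"
        by (simp add: Kpowr power_mult_distrib)
      finally show ?case using lower by (simp add: P_def X_def)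
    qed
  qed (use \<open>L > 0\<close> \<open>D > 0\<close> in simp_all)
qed

lemma grows_like_powr_dirichlet_pmf:
  fixes \<theta> :: "nat \<Rightarrow> real"
  assumes "0 < \<delta>" and ev: "eventually (\<lambda>K. \<delta> \<le> \<theta> K / real K) sequentially"
    and a: "a \<in> alloc_space n"
  shows "grows_like_powr (\<lambda>K. dirichlet_pmf n K (\<theta> K) a) (real (\<Sum>i<n. a ! i) - real n)"
proof -
  define m where "m = (\<Sum>i<n. a ! i)"
  have "grows_like_powr (\<lambda>K. fact n / (\<Prod>j<n. fact (a ! j)) * (fact K / fact (K - m))) (0 + real m)"
    by (intro grows_like_powr_mult grows_like_powr_const grows_like_powr_fact_div_fact)
       (simp add: prod_pos)
  from grows_like_powr_mult[OF this grows_like_powr_pochhammer_prod_div[OF assms]]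
  have "grows_like_powr (\<lambda>K. fact n / (\<Prod>j<n. fact (a ! j)) * (fact K / fact (K - m))
      * ((\<Prod>j<n. (pochhammer (\<theta> K / real K) (j + 1) / fact (j + 1)) ^ (a ! j))
         / pochhammer (\<theta> K) n)) (real m - real n)"
    by simp
  then show ?thesis
    unfolding m_def
    by (rule grows_like_powr_cong)
       (use ev \<open>0 < \<delta>\<close> in \<open>auto elim!: eventually_mono simp: dirichlet_pmf_eq\<close>)
qed

lemma dirichlet_law_log_limit:
  fixes \<theta> :: "nat \<Rightarrow> real"
  assumes "0 < \<delta>" and ev: "eventually (\<lambda>K. \<delta> \<le> \<theta> K / real K) sequentially"
    and F: "F \<subseteq> alloc_space n"
  shows "((\<lambda>K. ereal (1 / ln (real K)) * elog (dirichlet_law n K (\<theta> K) F))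
           \<longlongrightarrow> - (INF a\<in>F. I_esf n a)) sequentially"
proof (cases "F = {}")
  case True
  have "eventually (\<lambda>K. ereal (1 / ln (real K)) * elog (dirichlet_law n K (\<theta> K) F) = - \<infinity>) sequentially"
    using eventually_ge_at_top[of 2]
    by eventually_elim (simp add: True dirichlet_law_def elog_def)
  then have "((\<lambda>K. ereal (1 / ln (real K)) * elog (dirichlet_law n K (\<theta> K) F)) \<longlongrightarrow> - \<infinity>) sequentially"
    by (rule tendsto_eventually)
  then show ?thesis using True by (simp add: top_ereal_def)
next
  case False
  have "finite F" using finite_subset[OF F finite_alloc_space] .
  define a\<^sub>0 where "a\<^sub>0 = arg_min_on (I_esf n) F"
  have "a\<^sub>0 \<in> F" and a\<^sub>0_min: "\<And>a. a \<in> F \<Longrightarrow> I_esf n a\<^sub>0 \<le> I_esf n a"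
    using arg_min_if_finite(1)[OF \<open>finite F\<close> False] arg_min_least[OF \<open>finite F\<close> False]
    by (auto simp: a\<^sub>0_def)
  define e where "e a = real (\<Sum>i<n. a ! i) - real n" for a
  have I_esf_e: "I_esf n a = ereal (- e a)" for a
    by (simp add: I_esf_def e_def)
  have "grows_like_powr (\<lambda>K. dirichlet_law n K (\<theta> K) F) (e a\<^sub>0)"
    unfolding dirichlet_law_def Int_absorb2[OF F]
  proof (rule grows_like_powr_sum[OF \<open>finite F\<close> \<open>a\<^sub>0 \<in> F\<close>])
    show "e a \<le> e a\<^sub>0" if "a \<in> F" for a
      using a\<^sub>0_min[OF that] by (simp add: I_esf_e)
    show "grows_like_powr (\<lambda>K. dirichlet_pmf n K (\<theta> K) a) (e a)" if "a \<in> F" for a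
      using grows_like_powr_dirichlet_pmf[OF \<open>0 < \<delta>\<close> ev] that F by (auto simp: e_def)
  qed
  moreover have "(INF a\<in>F. I_esf n a) = I_esf n a\<^sub>0"
    using \<open>a\<^sub>0 \<in> F\<close> a\<^sub>0_min by (intro INF_eqI) auto
  ultimately show ?thesis
    by (simp add: I_esf_e grows_like_powr_tendsto_elog)
qed

lemma ldp_discrete_topologyI:
  assumes nonneg: "\<And>x. x \<in> S \<Longrightarrow> I x \<ge> 0"
    and limit: "\<And>F. F \<subseteq> S \<Longrightarrow>
      ((\<lambda>K. ereal (1 / s K) * elog (P K F)) \<longlongrightarrow> - (INF x\<in>F. I x)) sequentially"
  shows "ldp P s I (discrete_topology S)"
  unfolding ldp_def
proof (intro conjI allI impI ballI)
  fix x assume "x \<in> topspace (discrete_topology S)"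
  then show "I x \<ge> 0" using nonneg by simp
next
  fix \<alpha> :: real
  show "closedin (discrete_topology S) {x \<in> topspace (discrete_topology S). I x \<le> ereal \<alpha>}"
    by simp
next
  fix F assume "closedin (discrete_topology S) F"
  then have "F \<subseteq> S" by simp
  from lim_imp_Limsup[OF trivial_limit_sequentially limit[OF this]]
  show "limsup (\<lambda>K. ereal (1 / s K) * elog (P K F)) \<le> - (INF x\<in>F. I x)" by simp
next
  fix G assume "openin (discrete_topology S) G"
  then have "G \<subseteq> S" by simp
  from lim_imp_Liminf[OF trivial_limit_sequentially limit[OF this]]
  show "liminf (\<lambda>K. ereal (1 / s K) * elog (P K G)) \<ge> - (INF x\<in>G. I x)" by simp
qed

theorem theorem3p4:
  fixes n :: nat and \<theta> :: "nat \<Rightarrow> real" and c :: ereal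
  assumes "n \<ge> 1"
    and "\<And>K. \<theta> K > 0"
    and "c > 0"
    and "((\<lambda>K. ereal (\<theta> K / real K)) \<longlongrightarrow> c) sequentially"
  shows "ldp (\<lambda>K. dirichlet_law n K (\<theta> K)) (\<lambda>K. ln (real K)) (I_esf n)
             (discrete_topology (alloc_space n))"
proof -
  obtain \<delta> where "0 < ereal \<delta>" "ereal \<delta> < c"
    using ereal_dense2[OF assms(3)] by blast
  then have "0 < \<delta>" by simp
  have ev: "eventually (\<lambda>K. \<delta> \<le> \<theta> K / real K) sequentially"
    using order_tendstoD(1)[OF assms(4) \<open>ereal \<delta> < c\<close>] by (auto elim: eventually_mono)
  show ?thesis
  proof (rule ldp_discrete_topologyI)
    show "I_esf n a \<ge> 0" if "a \<in> alloc_space n" for a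
      using alloc_space_sum_le[OF that] by (simp add: I_esf_def flip: of_nat_sum)
  qed (rule dirichlet_law_log_limit[OF \<open>0 < \<delta>\<close> ev])
qed

end
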